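(* Fix a signal profile $\mathbf s$ and valuations $v_1,\dots,v_n$, and rename the bidders so that $v_1(\mathbf s)\ge v_2(\mathbf s)\ge\cdots\ge v_n(\mathbf s)$. Let $k=\max\{i: v_i(\mathbf s)>v_1(\mathbf s)/2\}$. Then for every $i\in[n]$, $$\mathbb E_{r,\pi}[c_i]\le\frac{1}{i(i+1)}+\frac{\log_2^\dagger\!\big(2v_i(\mathbf s)/\underline v_1^{(i)}(\mathbf s)\big)}{k+1}+\sum_{j\in[k]\setminus\{i\}}\frac{\log_2^\dagger\!\big(v_i(\mathbf s)/\underline v_j^{(i)}(\mathbf s)\big)}{j(j+1)}.$$
   Context: Single-item auction with $n$ bidders, signals $s_i\in S_i\subseteq\mathbb R$, valuations $v_i:\mathbf S\to\mathbb R_{>0}$, $\mathbf S=S_1\times\cdots\times S_n$. Lower estimates: $\underline v_j^{(i)}(\mathbf s)=\inf_{o_i\in S_i}v_j(o_i,\mathbf s_{-i})$ (for $j=i$ this is the infimum of bidder $i$'s own value over its own signal). $\log_2^\dagger(\alpha)=\max(0,\min(1,\log_2\alpha))$, with $a/0=\infty$ and $\log_2\infty=\infty$. For $r\in[0,1)$, $w>0$: $f_r(w)=2^{r+k'}$ for the integer $k'$ with $2^{r+k'}\le w<2^{r+k'+1}$; $f_r(0)=0$. For a permutation $\pi$ of $[n]$, $a$ associated with bidder $i$ and $b$ with bidder $j$: $a>_\pi b$ iff $a>b$, or $a=b$ and $\pi(i)>\pi(j)$. $c_i(r,\pi)=1$ iff $f_r(v_i(\mathbf s))>_\pi f_r(\underline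 v_j^{(i)}(\mathbf s))$ for all $j\ne i$, else $0$; $r\sim U[0,1)$ and $\pi$ uniformly random, independent. *)

theory Defs
  imports "HOL-Analysis.Analysis" "HOL-Combinatorics.Permutations"
begin

text \<open>Bidders are 1..n. A signal profile is a function nat => real; the signal
  space of bidder l is S l. A valuation profile is v :: nat => (nat => real) => real,
  v j t being bidder j's value at profile t.\<close>

definition lower_est :: "(nat \<Rightarrow> real set) \<Rightarrow> (nat \<Rightarrow> (nat \<Rightarrow> real) \<Rightarrow> real)
    \<Rightarrow> (nat \<Rightarrow> real) \<Rightarrow> nat \<Rightarrow> nat \<Rightarrow> real" where
  "lower_est S v s j i = (INF x\<in>S i. v j (s(i := x)))"

text \<open>log-dagger of the ratio a/b (a > 0, b >= 0), with a/0 = infinity and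
  log_2 infinity = infinity, so the value is 1 when b = 0.\<close>
definition logdag_ratio :: "real \<Rightarrow> real \<Rightarrow> real" where
  "logdag_ratio a b = (if b = 0 then 1 else max 0 (min 1 (log 2 (a / b))))"

definition f_r :: "real \<Rightarrow> real \<Rightarrow> real" where
  "f_r r w = (if w \<le> 0 then 0 else 2 powr (r + real_of_int \<lfloor>log 2 w - r\<rfloor>))"

definition gt_pi :: "(nat \<Rightarrow> nat) \<Rightarrow> real \<Rightarrow> nat \<Rightarrow> real \<Rightarrow> nat \<Rightarrow> bool" where
  "gt_pi \<pi> a i b j = (a > b \<or> (a = b \<and> \<pi> i > \<pi> j))"

definition c_win :: "nat \<Rightarrow> (nat \<Rightarrow> real set) \<Rightarrow> (nat \<Rightarrow> (nat \<Rightarrow> real) \<Rightarrow> real)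
    \<Rightarrow> (nat \<Rightarrow> real) \<Rightarrow> nat \<Rightarrow> real \<Rightarrow> (nat \<Rightarrow> nat) \<Rightarrow> bool" where
  "c_win n S v s i r \<pi> =
     (\<forall>j\<in>{1..n}. j \<noteq> i \<longrightarrow> gt_pi \<pi> (f_r r (v i s)) i (f_r r (lower_est S v s j i)) j)"

text \<open>E_{r,pi}[c_i] with r ~ U[0,1) and pi a uniformly random permutation of {1..n},
  independent.\<close>
definition expected_c :: "nat \<Rightarrow> (nat \<Rightarrow> real set) \<Rightarrow> (nat \<Rightarrow> (nat \<Rightarrow> real) \<Rightarrow> real)
    \<Rightarrow> (nat \<Rightarrow> real) \<Rightarrow> nat \<Rightarrow> real" where
  "expected_c n S v s i =
     (\<Sum>\<pi>\<in>{\<pi>. \<pi> permutes {1..n}}. measure lborel {r \<in> {0..<1}. c_win n S v s i r \<pi>})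
       / real (card {\<pi>. \<pi> permutes {1..n}})"

end

theory Submission
  imports Defs
begin

text \<open>Fix the offset r. Bidder i can win only if bidder 1's rounded lower estimate lies below
  f_r(2 v_i), and every bidder j \<le> k whose rounded estimate is not strictly below f_r(v_i) ties
  with i, so i must precede all u such bidders in the random priority, which happens with
  probability 1/(u+1). Charging 1/(u+1) to the indices j whose estimates do round below costs at
  most 1/(i(i+1)) + 1/(k+1) plus the sum of 1/(j(j+1)) over those j, by telescoping. Integrating
  over r, the event f_r(b) < f_r(a) has measure at most logdag_ratio a b, because the rounding
  grid is a uniformly shifted copy of the powers of 2.\<close>

lemma f_r_measurable [measurable]: "(\<lambda>r. f_r r w) \<in> borel_measurable borel"
  unfolding f_r_def by measurable

lemma f_r_pos: "0 < w \<Longrightarrow> 0 < f_r r w"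
  by (simp add: f_r_def)

lemma f_r_less_iff_floor:
  assumes "0 < a" "0 < b"
  shows "f_r r b < f_r r a \<longleftrightarrow> \<lfloor>log 2 b - r\<rfloor> < \<lfloor>log 2 a - r\<rfloor>"
  using assms by (simp add: f_r_def)

lemma mono_f_r: "mono (f_r r)"
proof (rule monoI)
  fix a b :: real
  assume "b \<le> a"
  show "f_r r b \<le> f_r r a"
  proof (cases "0 < b")
    case True
    with \<open>b \<le> a\<close> have "\<lfloor>log 2 b - r\<rfloor> \<le> \<lfloor>log 2 a - r\<rfloor>"
      by (intro floor_mono) simp
    with True \<open>b \<le> a\<close> show ?thesis
      by (simp add: f_r_def)
  qed (simp add: f_r_def)
qed

lemma f_r_double:
  assumes "0 < a"
  shows "f_r r (2 * a) = 2 * f_r r a"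
proof -
  have "log 2 (2 * a) - r = (log 2 a - r) + of_int 1"
    using assms by (simp add: log_mult)
  then have "\<lfloor>log 2 (2 * a) - r\<rfloor> = \<lfloor>log 2 a - r\<rfloor> + 1"
    by (simp only: floor_add_int)
  then show ?thesis
    using assms by (simp add: f_r_def powr_add)
qed

lemma fmeasurable_if_subset_unit:
  fixes A :: "real set"
  assumes "A \<in> sets borel" "A \<subseteq> {0..1}"
  shows "A \<in> fmeasurable lborel"
  using assms by (intro fmeasurableI2[OF fmeasurable_cbox[of 0 1]]) auto

lemma measure_le_1_if_subset_unit:
  fixes A :: "real set"
  assumes "A \<in> sets borel" "A \<subseteq> {0..1}"
  shows "measure lborel A \<le> 1"
  using measure_mono_fmeasurable[OF assms(2), of lborel] assms(1)
    fmeasurable_if_subset_unit[of "{0..1}"] by simp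

text \<open>For r in [0,1), \<lfloor>x - r\<rfloor> is \<lfloor>x\<rfloor> or \<lfloor>x\<rfloor> - 1 according as r \<le> frac x, which covers
  the set by two intervals of total length x - y.\<close>

lemma measure_floor_jump_le:
  fixes x y :: real
  assumes "y \<le> x"
  shows "measure lborel {r \<in> {0..<1}. \<lfloor>y - r\<rfloor> < \<lfloor>x - r\<rfloor>} \<le> x - y"
proof -
  let ?A = "{r \<in> {0..<1::real}. \<lfloor>y - r\<rfloor> < \<lfloor>x - r\<rfloor>}"
  have A_sets: "?A \<in> sets borel" by measurable
  show ?thesis
  proof (cases "1 \<le> x - y")
    case True
    moreover have "measure lborel ?A \<le> 1"
      by (rule measure_le_1_if_subset_unit[OF A_sets]) auto
    ultimately show ?thesis
      by linarith
  next
    case False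
    define d where "d = x - y"
    define c where "c = x - \<lfloor>x\<rfloor>"
    have c: "0 \<le> c" "c < 1"
      unfolding c_def by linarith+
    have d: "0 \<le> d" "d < 1"
      using False \<open>y \<le> x\<close> by (simp_all add: d_def)
    have "?A \<subseteq> {max 0 (c - d)..c} \<union> {min 1 (c + 1 - d)..1}"
    proof
      fix r
      assume r: "r \<in> ?A"
      show "r \<in> {max 0 (c - d)..c} \<union> {min 1 (c + 1 - d)..1}"
      proof (cases "r \<le> c")
        case True
        then have "\<lfloor>x - r\<rfloor> = \<lfloor>x\<rfloor>"
          using r c by (simp add: floor_eq_iff c_def)
        with r have "y - r < \<lfloor>x\<rfloor>"
          by (simp add: floor_less_iff)
        with True r show ?thesis
          by (simp add: c_def d_def)
      next
        case False
        then have "\<lfloor>x - r\<rfloor> = \<lfloor>x\<rfloor> - 1"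
          using r by (simp add: floor_eq_iff c_def) (use of_int_floor_le[of x] in linarith)
        with r have "y - r < \<lfloor>x\<rfloor> - 1"
          by (simp add: floor_less_iff)
        with r show ?thesis
          by (simp add: c_def d_def)
      qed
    qed
    then have "measure lborel ?A \<le> measure lborel ({max 0 (c - d)..c} \<union> {min 1 (c + 1 - d)..1})"
      using A_sets c d by (intro measure_mono_fmeasurable fmeasurable_if_subset_unit) auto
    also have "\<dots> \<le> measure lborel {max 0 (c - d)..c} + measure lborel {min 1 (c + 1 - d)..1}"
      by (rule measure_Un_le) auto
    also have "\<dots> = d"
      using c d by (simp add: max_def min_def)
    finally show ?thesis
      by (simp add: d_def)
  qed
qed

definition rounds_below :: "real \<Rightarrow> real \<Rightarrow> real set" where
  "rounds_below a b = {r \<in> {0..<1}. f_r r b < f_r r a}"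

lemma rounds_below_sets [measurable]: "rounds_below a b \<in> sets borel"
  unfolding rounds_below_def by measurable

lemma rounds_below_subset_unit: "rounds_below a b \<subseteq> {0..1}"
  by (auto simp: rounds_below_def)

lemma rounds_below_fmeasurable: "rounds_below a b \<in> fmeasurable lborel"
  by (rule fmeasurable_if_subset_unit[OF rounds_below_sets rounds_below_subset_unit])

lemma measure_rounds_below_le:
  assumes a: "0 < a" and b: "0 \<le> b"
  shows "measure lborel (rounds_below a b) \<le> logdag_ratio a b"
proof -
  have le_1: "measure lborel (rounds_below a b) \<le> 1"
    by (rule measure_le_1_if_subset_unit[OF rounds_below_sets rounds_below_subset_unit])
  consider "b = 0" | "0 < b" "a \<le> b" | "0 < b" "b < a"
    using b by linarith
  then show ?thesis
  proof cases
    case 1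
    then show ?thesis
      using le_1 by (simp add: logdag_ratio_def)
  next
    case 2
    then have "f_r r a \<le> f_r r b" for r
      by (intro monoD[OF mono_f_r])
    then have "rounds_below a b = {}"
      unfolding rounds_below_def using leD by blast
    then show ?thesis
      by (simp add: logdag_ratio_def)
  next
    case 3
    then have log_pos: "0 < log 2 (a / b)"
      by simp
    have "rounds_below a b = {r \<in> {0..<1}. \<lfloor>log 2 b - r\<rfloor> < \<lfloor>log 2 a - r\<rfloor>}"
      using a 3 by (simp add: rounds_below_def f_r_less_iff_floor)
    then have "measure lborel (rounds_below a b) \<le> log 2 a - log 2 b"
      using measure_floor_jump_le[of "log 2 b" "log 2 a"] 3 by simp
    then show ?thesis
      using le_1 log_pos a 3 by (simp add: logdag_ratio_def log_divide)
  qed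
qed

text \<open>Composing with the transposition of i and t embeds the permutations maximal on U at i
  into those maximal at t, and these classes are disjoint.\<close>

lemma card_permutes_max_mult_le:
  fixes A U :: "'a::linorder set"
  assumes A: "finite A" and U: "U \<subseteq> A" and i: "i \<in> U"
  shows "card {\<pi>. \<pi> permutes A \<and> (\<forall>j\<in>U - {i}. \<pi> j < \<pi> i)} * card U
           \<le> card {\<pi>. \<pi> permutes A}"
proof -
  define E where "E t = {\<pi>. \<pi> permutes A \<and> (\<forall>j\<in>U - {t}. \<pi> j < \<pi> t)}" for t
  have fin_perms: "finite {\<pi>. \<pi> permutes A}"
    using A by (rule finite_permutations)
  have fin_E: "finite (E t)" for t
    by (rule finite_subset[OF _ fin_perms]) (auto simp: E_def)
  have "card (E i) \<le> card (E t)" if t: "t \<in> U" for t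
  proof (rule card_inj_on_le[OF _ _ fin_E])
    show "inj_on (\<lambda>\<pi>. \<pi> \<circ> Transposition.transpose i t) (E i)"
      by (rule inj_onI) (metis comp_id comp_assoc transpose_comp_involutory)
    show "(\<lambda>\<pi>. \<pi> \<circ> Transposition.transpose i t) ` E i \<subseteq> E t"
    proof clarify
      fix \<pi>
      assume "\<pi> \<in> E i"
      then have \<pi>: "\<pi> permutes A" "\<forall>j\<in>U - {i}. \<pi> j < \<pi> i"
        by (auto simp: E_def)
      have "\<pi> \<circ> Transposition.transpose i t permutes A"
        using \<pi>(1) U i t by (intro permutes_compose permutes_swap_id) auto
      moreover have "Transposition.transpose i t j \<in> U - {i}" if "j \<in> U - {t}" for j
        using that i t by (auto simp: Transposition.transpose_def)
      ultimately show "\<pi> \<circ> Transposition.transpose i t \<in> E t"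
        using \<pi>(2) by (auto simp: E_def)
    qed
  qed
  then have "card (E i) * card U \<le> (\<Sum>t\<in>U. card (E t))"
    using sum_mono[of U "\<lambda>_. card (E i)" "\<lambda>t. card (E t)"] by (simp add: mult.commute)
  also have "\<dots> = card (\<Union>t\<in>U. E t)"
  proof (rule card_UN_disjoint[symmetric])
    show "finite U"
      using A U by (rule rev_finite_subset)
    have False if "s \<in> U" "t \<in> U" "s \<noteq> t" "\<pi> \<in> E s" "\<pi> \<in> E t" for s t \<pi>
    proof -
      from that have "\<pi> t < \<pi> s" "\<pi> s < \<pi> t"
        by (auto simp: E_def)
      then show False
        by simp
    qed
    then show "\<forall>s\<in>U. \<forall>t\<in>U. s \<noteq> t \<longrightarrow> E s \<inter> E t = {}"
      by blast
  qed (use fin_E in auto)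
  also have "\<dots> \<le> card {\<pi>. \<pi> permutes A}"
    using fin_perms by (intro card_mono) (auto simp: E_def)
  finally show ?thesis
    by (simp add: E_def)
qed

lemma inverse_pronic_eq: "0 < t \<Longrightarrow> 1 / (t * (t + 1)) = 1 / t - 1 / (t + 1 :: real)"
  by (simp add: field_simps)

text \<open>Among the h-element subsets of {1..k} the sum is least for {k-h+1..k}, where it
  telescopes to the left-hand side.\<close>

lemma sum_inverse_pronic_ge:
  assumes "H \<subseteq> {1..k}"
  shows "1 / (real k - real (card H) + 1) - 1 / (real k + 1)
           \<le> (\<Sum>j\<in>H. 1 / (real j * (real j + 1)))"
  using assms
proof (induction k arbitrary: H)
  case 0
  then show ?case
    by simp
next
  case (Suc k)
  have fin: "finite H"
    using Suc.prems finite_subset by blast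
  show ?case
  proof (cases "Suc k \<in> H")
    case True
    define H' where "H' = H - {Suc k}"
    have H': "H' \<subseteq> {1..k}"
      using Suc.prems by (auto simp: H'_def)
    have card_H: "real (card H) = real (card H') + 1"
      using card_Suc_Diff1[OF fin True] by (simp add: H'_def)
    have "(\<Sum>j\<in>H. 1 / (real j * (real j + 1)))
            = 1 / (real k + 1) - 1 / (real k + 2) + (\<Sum>j\<in>H'. 1 / (real j * (real j + 1)))"
      using True fin inverse_pronic_eq[of "real k + 1"] by (simp add: H'_def sum.remove add_ac)
    moreover have "real (Suc k) - real (card H) + 1 = real k - real (card H') + 1"
      "real (Suc k) + 1 = real k + 2"
      using card_H by simp_all
    ultimately show ?thesis
      using Suc.IH[OF H'] by (simp only:)
  next
    case False
    then have H: "H \<subseteq> {1..k}"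
      using Suc.prems by (auto simp: subset_iff le_Suc_eq)
    define m where "m = real k - real (card H) + 1"
    have m: "1 \<le> m" "m \<le> real k + 1"
      using card_mono[OF _ H] by (auto simp: m_def)
    have "1 / ((real k + 1) * (real k + 2)) \<le> 1 / (m * (m + 1))"
      using m by (intro divide_left_mono mult_mono) auto
    then have "1 / (m + 1) - 1 / (real k + 2) \<le> 1 / m - 1 / (real k + 1)"
      using m inverse_pronic_eq[of m] inverse_pronic_eq[of "real k + 1"] by (simp add: add_ac)
    with Suc.IH[OF H] show ?thesis
      by (simp add: m_def add_ac)
  qed
qed

lemma inverse_card_diff_le:
  assumes G: "G \<subseteq> {1..k} - {i}"
  shows "1 / real (card ({1..k} - {i} - G) + 1)
           \<le> 1 / (real i * (real i + 1)) + 1 / (real k + 1)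
             + (\<Sum>j\<in>G. 1 / (real j * (real j + 1)))"
proof -
  define H where "H = G \<union> ({i} \<inter> {1..k})"
  have H: "H \<subseteq> {1..k}"
    using G by (auto simp: H_def)
  have fin_G: "finite G" and i_G: "i \<notin> G"
    using G by (auto simp: finite_subset)
  have "card ({1..k} - {i} - G) = card ({1..k} - H)"
    by (rule arg_cong[where f = card]) (auto simp: H_def)
  also have "\<dots> = k - card H"
    using H by (simp add: card_Diff_subset finite_subset)
  finally have "1 / real (card ({1..k} - {i} - G) + 1) = 1 / (real k - real (card H) + 1)"
    using card_mono[OF _ H] by (simp add: of_nat_diff)
  also have "\<dots> \<le> 1 / (real k + 1) + (\<Sum>j\<in>H. 1 / (real j * (real j + 1)))"
    using sum_inverse_pronic_ge[OF H] by linarith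
  also have "(\<Sum>j\<in>H. 1 / (real j * (real j + 1)))
               \<le> (\<Sum>j\<in>insert i G. 1 / (real j * (real j + 1)))"
    using fin_G by (intro sum_mono2) (auto simp: H_def)
  also have "\<dots> = 1 / (real i * (real i + 1)) + (\<Sum>j\<in>G. 1 / (real j * (real j + 1)))"
    using fin_G i_G by simp
  finally show ?thesis
    by simp
qed

definition rounded_win :: "nat \<Rightarrow> nat \<Rightarrow> real \<Rightarrow> (nat \<Rightarrow> real) \<Rightarrow> real \<Rightarrow> (nat \<Rightarrow> nat) \<Rightarrow> bool" where
  "rounded_win n i a b r \<pi> \<longleftrightarrow> (\<forall>j\<in>{1..n}. j \<noteq> i \<longrightarrow> gt_pi \<pi> (f_r r a) i (f_r r (b j)) j)"

lemma rounded_win_imp_rounds_below_double: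
  assumes win: "rounded_win n i a b r \<pi>" and a: "0 < a" and b_i: "b i \<le> a"
    and i: "i \<in> {1..n}" and r: "r \<in> {0..<1}"
  shows "r \<in> rounds_below (2 * a) (b 1)"
proof -
  have "f_r r (b 1) \<le> f_r r a"
  proof (cases "i = 1")
    case True
    with b_i show ?thesis
      by (simp add: monoD[OF mono_f_r])
  next
    case False
    with win i show ?thesis
      by (auto simp: rounded_win_def gt_pi_def)
  qed
  also have "f_r r a < f_r r (2 * a)"
    using a by (simp add: f_r_double f_r_pos)
  finally show ?thesis
    using r by (simp add: rounds_below_def)
qed

lemma rounded_win_imp_priority:
  assumes "rounded_win n i a b r \<pi>" "j \<in> {1..n}" "j \<noteq> i" "r \<notin> rounds_below a (b j)"
    "r \<in> {0..<1}"
  shows "\<pi> j < \<pi> i"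
  using assms by (auto simp: rounded_win_def gt_pi_def rounds_below_def)

lemma card_rounded_win_le:
  assumes a: "0 < a" and b_i: "b i \<le> a" and i: "i \<in> {1..n}" and k: "k \<le> n"
    and r: "r \<in> {0..<1}"
  shows "real (card {\<pi>. \<pi> permutes {1..n} \<and> rounded_win n i a b r \<pi>})
           \<le> real (card {\<pi>. \<pi> permutes {1..n}})
             * (1 / (real i * (real i + 1))
                + indicator (rounds_below (2 * a) (b 1)) r / (real k + 1)
                + (\<Sum>j\<in>{1..k} - {i}. indicator (rounds_below a (b j)) r / (real j * (real j + 1))))"
    (is "real (card ?W) \<le> real (card ?P) * ?bound")
proof (cases "r \<in> rounds_below (2 * a) (b 1)")
  case False
  then have no_winner: "?W = {}"
    using rounded_win_imp_rounds_below_double[of n i a b r] a b_i i r by blast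
  have "0 \<le> ?bound"
    by (intro add_nonneg_nonneg sum_nonneg divide_nonneg_nonneg) auto
  then show ?thesis
    unfolding no_winner by simp
next
  case True
  define K where "K = {1..k} - {i}"
  define G where "G = {j \<in> K. r \<in> rounds_below a (b j)}"
  define U where "U = insert i (K - G)"
  have K: "K \<subseteq> {1..n} - {i}"
    using k by (auto simp: K_def)
  have U: "U \<subseteq> {1..n}"
    using K i by (auto simp: U_def)
  have "\<pi> j < \<pi> i" if "\<pi> \<in> ?W" "j \<in> U - {i}" for \<pi> j
  proof -
    from that(2) K have "j \<in> {1..n}" "j \<noteq> i" "r \<notin> rounds_below a (b j)"
      by (auto simp: U_def G_def)
    with that(1) r show ?thesis
      by (auto intro: rounded_win_imp_priority)
  qed
  then have "?W \<subseteq> {\<pi>. \<pi> permutes {1..n} \<and> (\<forall>j\<in>U - {i}. \<pi> j < \<pi> i)}"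
    by blast
  then have "card ?W \<le> card {\<pi>. \<pi> permutes {1..n} \<and> (\<forall>j\<in>U - {i}. \<pi> j < \<pi> i)}"
    by (intro card_mono) (auto intro: finite_subset[OF _ finite_permutations])
  then have "card ?W * card U \<le> card ?P"
    using card_permutes_max_mult_le[OF _ U, of i] by (simp add: U_def) (meson le_trans mult_le_mono1)
  moreover have "card U = card (K - G) + 1"
    by (simp add: U_def K_def)
  ultimately have "real (card ?W) \<le> real (card ?P) * (1 / real (card (K - G) + 1))"
    by (simp add: field_simps flip: of_nat_mult)
  also have "1 / real (card (K - G) + 1)
               \<le> 1 / (real i * (real i + 1)) + 1 / (real k + 1)
                 + (\<Sum>j\<in>G. 1 / (real j * (real j + 1)))"
    unfolding K_def by (rule inverse_card_diff_le) (auto simp: G_def K_def)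
  also have "(\<Sum>j\<in>G. 1 / (real j * (real j + 1)))
               = (\<Sum>j\<in>K. indicator (rounds_below a (b j)) r / (real j * (real j + 1)))"
    unfolding G_def by (subst sum.inter_filter) (auto simp: K_def indicator_def intro!: sum.cong split: if_splits)
  finally show ?thesis
    using True by (simp add: K_def mult_left_mono)
qed

lemma sum_measure_le_integral:
  fixes C :: "'p \<Rightarrow> 'a set" and g :: "'a \<Rightarrow> real"
  assumes "finite P" "\<And>p. p \<in> P \<Longrightarrow> C p \<in> fmeasurable M" "integrable M g"
    and "\<And>x. x \<in> space M \<Longrightarrow> (\<Sum>p\<in>P. indicator (C p) x) \<le> g x"
  shows "(\<Sum>p\<in>P. measure M (C p)) \<le> integral\<^sup>L M g"
proof -
  have int_C: "integrable M (indicat_real (C p))" if "p \<in> P" for p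
    using assms(2)[OF that] by (simp add: fmeasurable_def)
  have "(\<Sum>p\<in>P. measure M (C p)) = (\<Sum>p\<in>P. integral\<^sup>L M (indicat_real (C p)))"
    using assms(2) by (intro sum.cong) (auto simp: fmeasurable_def)
  also have "\<dots> = integral\<^sup>L M (\<lambda>x. \<Sum>p\<in>P. indicator (C p) x)"
    using int_C by (simp add: Bochner_Integration.integral_sum)
  also have "\<dots> \<le> integral\<^sup>L M g"
    using int_C assms(3,4) by (intro integral_mono) auto
  finally show ?thesis .
qed

lemma rounded_win_sets [measurable]: "{r \<in> {0..<1}. rounded_win n i a b r \<pi>} \<in> sets borel"
  unfolding rounded_win_def gt_pi_def by measurable

lemma expected_rounded_win_le:
  assumes a: "0 < a" and b: "\<forall>j\<in>{1..n}. 0 \<le> b j" and b_i: "b i \<le> a"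
    and i: "i \<in> {1..n}" and k: "k \<le> n"
  shows "(\<Sum>\<pi>\<in>{\<pi>. \<pi> permutes {1..n}}. measure lborel {r \<in> {0..<1}. rounded_win n i a b r \<pi>})
           / real (card {\<pi>. \<pi> permutes {1..n}})
         \<le> 1 / (real i * (real i + 1))
           + logdag_ratio (2 * a) (b 1) / (real k + 1)
           + (\<Sum>j\<in>{1..k} - {i}. logdag_ratio a (b j) / (real j * (real j + 1)))"
proof -
  define P where "P = {\<pi>. \<pi> permutes {1..n::nat}}"
  define N where "N = real (card P)"
  define h where "h r = 1 / (real i * (real i + 1)) * indicator {0..<1} r
    + indicator (rounds_below (2 * a) (b 1)) r / (real k + 1)
    + (\<Sum>j\<in>{1..k} - {i}. indicator (rounds_below a (b j)) r / (real j * (real j + 1)))" for r :: real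
  have fin_P: "finite P"
    unfolding P_def by (rule finite_permutations) simp
  have "id \<in> P"
    by (simp add: P_def permutes_id)
  then have N_pos: "0 < N"
    using fin_P by (auto simp: N_def card_gt_0_iff)
  have int_unit: "integrable lborel (indicat_real A)" if "A \<in> sets borel" "A \<subseteq> {0..1}" for A :: "real set"
    using fmeasurable_if_subset_unit[OF that] by (simp add: fmeasurable_def)
  have int_h: "integrable lborel h"
    unfolding h_def by (intro Bochner_Integration.integrable_add Bochner_Integration.integrable_sum
        Bochner_Integration.integrable_mult_right Bochner_Integration.integrable_divide_zero
        int_unit rounds_below_sets rounds_below_subset_unit) auto
  have "(\<Sum>\<pi>\<in>P. measure lborel {r \<in> {0..<1}. rounded_win n i a b r \<pi>}) \<le> integral\<^sup>L lborel (\<lambda>r. N * h r)"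
  proof (rule sum_measure_le_integral[OF fin_P])
    show "{r \<in> {0..<1}. rounded_win n i a b r \<pi>} \<in> fmeasurable lborel" for \<pi>
      by (rule fmeasurable_if_subset_unit[OF rounded_win_sets]) auto
    show "integrable lborel (\<lambda>r. N * h r)"
      using int_h by simp
    fix r :: real
    show "(\<Sum>\<pi>\<in>P. indicator {r \<in> {0..<1}. rounded_win n i a b r \<pi>} r) \<le> N * h r"
    proof (cases "r \<in> {0..<1}")
      case True
      have "(\<Sum>\<pi>\<in>P. indicator {r \<in> {0..<1}. rounded_win n i a b r \<pi>} r)
              = real (card {\<pi>. \<pi> permutes {1..n} \<and> rounded_win n i a b r \<pi>})"
        using True fin_P by (simp add: indicator_def sum.If_cases Collect_conj_eq P_def)
      also have "\<dots> \<le> N * h r"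
        using card_rounded_win_le[where b = b, OF a b_i i k True] True by (simp add: N_def P_def h_def)
      finally show ?thesis .
    next
      case False
      then have "(\<Sum>\<pi>\<in>P. indicator {r \<in> {0..<1}. rounded_win n i a b r \<pi>} r) = (0::real)"
        by (intro sum.neutral) (auto simp: indicator_def)
      moreover have "0 \<le> N * h r"
        unfolding h_def using N_pos
        by (intro mult_nonneg_nonneg add_nonneg_nonneg sum_nonneg divide_nonneg_nonneg) auto
      ultimately show ?thesis
        by simp
    qed
  qed
  also have "integral\<^sup>L lborel (\<lambda>r. N * h r) = N * (1 / (real i * (real i + 1))
      + measure lborel (rounds_below (2 * a) (b 1)) / (real k + 1)
      + (\<Sum>j\<in>{1..k} - {i}. measure lborel (rounds_below a (b j)) / (real j * (real j + 1))))"
    using rounds_below_fmeasurable unfolding h_def fmeasurable_def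
    by (simp add: Bochner_Integration.integral_add Bochner_Integration.integral_sum integrable_sum)
  also have "\<dots> \<le> N * (1 / (real i * (real i + 1))
      + logdag_ratio (2 * a) (b 1) / (real k + 1)
      + (\<Sum>j\<in>{1..k} - {i}. logdag_ratio a (b j) / (real j * (real j + 1))))"
    using N_pos a b i k
    by (intro mult_left_mono add_mono sum_mono divide_right_mono measure_rounds_below_le) auto
  finally show ?thesis
    using N_pos by (simp add: P_def N_def field_simps)
qed

lemma lower_est_nonneg:
  assumes "s i \<in> S i" "\<forall>x\<in>S i. 0 < v j (s(i := x))"
  shows "0 \<le> lower_est S v s j i"
  unfolding lower_est_def using assms by (intro cINF_greatest) (auto intro: less_imp_le)

lemma lower_est_le:
  assumes "s i \<in> S i" "\<forall>x\<in>S i. 0 < v j (s(i := x))"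
  shows "lower_est S v s j i \<le> v j s"
proof -
  have "bdd_below ((\<lambda>x. v j (s(i := x))) ` S i)"
    using assms(2) by (intro bdd_belowI[of _ 0]) (auto intro: less_imp_le)
  then have "lower_est S v s j i \<le> v j (s(i := s i))"
    unfolding lower_est_def using assms(1) by (rule cINF_lower)
  then show ?thesis
    by simp
qed

theorem mainTheorem10:
  fixes n :: nat and S :: "nat \<Rightarrow> real set"
    and v :: "nat \<Rightarrow> (nat \<Rightarrow> real) \<Rightarrow> real" and s :: "nat \<Rightarrow> real"
  assumes S_ne: "\<forall>l\<in>{1..n}. S l \<noteq> {}"
    and s_in: "\<forall>l\<in>{1..n}. s l \<in> S l"
    and v_pos: "\<forall>j\<in>{1..n}. \<forall>t. (\<forall>l\<in>{1..n}. t l \<in> S l) \<longrightarrow> v j t > 0"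
    and sorted: "\<forall>a\<in>{1..n}. \<forall>b\<in>{1..n}. a \<le> b \<longrightarrow> v b s \<le> v a s"
    and i_in: "i \<in> {1..n}"
  defines "k \<equiv> Max {l\<in>{1..n}. v l s > v 1 s / 2}"
  shows "expected_c n S v s i \<le>
           1 / (real i * (real i + 1))
         + logdag_ratio (2 * v i s) (lower_est S v s 1 i) / (real k + 1)
         + (\<Sum>j\<in>{1..k} - {i}. logdag_ratio (v i s) (lower_est S v s j i) / (real j * (real j + 1)))"
proof -
  have s_i: "s i \<in> S i"
    using s_in i_in by blast
  have v_upd_pos: "\<forall>x\<in>S i. 0 < v j (s(i := x))" if "j \<in> {1..n}" for j
    using v_pos s_in that by auto
  have "1 \<in> {l\<in>{1..n}. v l s > v 1 s / 2}"
    using v_pos s_in i_in by auto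
  then have k_le: "k \<le> n"
    unfolding k_def by (subst Max_le_iff) auto
  have "expected_c n S v s i
      = (\<Sum>\<pi>\<in>{\<pi>. \<pi> permutes {1..n}}.
           measure lborel {r \<in> {0..<1}. rounded_win n i (v i s) (\<lambda>j. lower_est S v s j i) r \<pi>})
        / real (card {\<pi>. \<pi> permutes {1..n}})"
    by (simp add: expected_c_def c_win_def rounded_win_def)
  moreover have "0 < v i s"
    using v_pos s_in i_in by blast
  moreover have "\<forall>j\<in>{1..n}. 0 \<le> lower_est S v s j i"
    using s_i v_upd_pos by (blast intro: lower_est_nonneg)
  moreover have "lower_est S v s i i \<le> v i s"
    using s_i v_upd_pos[OF i_in] by (rule lower_est_le)
  ultimately show ?thesis
    using expected_rounded_win_le[OF _ _ _ i_in k_le] by simp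
qed

end
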